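(* Let $n\ge5$ and let $f(x)=x^n+a_2x^{n-2}+a_3x^{n-3}+\dots+a_{n-1}x+a_n$ be a polynomial (with zero coefficient of $x^{n-1}$) all of whose roots are real. Then $$\Big(\frac{24}{n}(a_2^2-2a_4)\Big)^{1/4}\le\operatorname{spn}(f)\le 2\,(a_2^2-2a_4)^{1/4}.$$
   Context: If $x_1,\dots,x_n$ are the roots of $f$, the span of $f$ is $\operatorname{spn}(f)=\max_{i,j}|x_i-x_j|$. *)

theory Defs
  imports "HOL-Computational_Algebra.Polynomial" Complex_Main
begin

text \<open>Span of a real polynomial: the maximal distance between two of its (real) roots.
  Only used for polynomials all of whose roots are real.\<close>
definition spn :: "real poly \<Rightarrow> real" where
  "spn p = Max {\<bar>x - y\<bar> | x y. poly p x = 0 \<and> poly p y = 0}"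

end

theory Submission
  imports Defs "HOL-Computational_Algebra.Fundamental_Theorem_Algebra"
begin

text \<open>Write \<open>f = (x - x\<^sub>1) \<cdots> (x - x\<^sub>n)\<close> with real \<open>x\<^sub>i\<close>, and let \<open>m \<le> x\<^sub>i \<le> M\<close> with
  \<open>spn f = M - m\<close>. By Vieta, \<open>a\<^sub>2\<close> and \<open>a\<^sub>4\<close> are the elementary symmetric functions \<open>e\<^sub>2, e\<^sub>4\<close>
  of the roots and \<open>e\<^sub>1 = 0\<close>, so Newton's identities give \<open>a\<^sub>2\<^sup>2 - 2 a\<^sub>4 = p\<^sub>4 / 2\<close> with
  \<open>p\<^sub>4 = \<Sum> x\<^sub>i\<^sup>4\<close>. The upper bound follows from \<open>(M - m)\<^sup>4 \<le> 8 (M\<^sup>4 + m\<^sup>4) \<le> 8 p\<^sub>4\<close>.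
  For the lower bound, each \<open>x\<^sub>i\<^sup>4\<close> lies below the chord of \<open>x\<^sup>4\<close> over \<open>[m, M]\<close>; summing and
  using \<open>\<Sum> x\<^sub>i = 0\<close> gives \<open>(M - m) p\<^sub>4 \<le> n (M m\<^sup>4 - m M\<^sup>4)\<close>, and
  \<open>(M - m)\<^sup>5 - 12 (M m\<^sup>4 - m M\<^sup>4) = (M - m) (M\<^sup>2 + 4 M m + m\<^sup>2)\<^sup>2 \<ge> 0\<close>.\<close>

fun esym :: "'a::comm_ring_1 list \<Rightarrow> nat \<Rightarrow> 'a" where
  "esym [] k = (if k = 0 then 1 else 0)"
| "esym (x # xs) 0 = 1"
| "esym (x # xs) (Suc k) = esym xs (Suc k) + x * esym xs k"

definition psum :: "'a::comm_ring_1 list \<Rightarrow> nat \<Rightarrow> 'a" where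
  "psum xs k = (\<Sum>x\<leftarrow>xs. x ^ k)"

lemma esym_0 [simp]: "esym xs 0 = 1"
  by (cases xs) auto

lemma esym_eq_0_if_length_less: "length xs < k \<Longrightarrow> esym xs k = 0"
  by (induction xs arbitrary: k) (auto elim: less_natE simp: gr0_conv_Suc)

lemma psum_Nil [simp]: "psum [] k = 0"
  and psum_Cons [simp]: "psum (x # xs) k = x ^ k + psum xs k"
  by (simp_all add: psum_def)

lemma newton_identities_upto_4:
  fixes xs :: "'a::field_char_0 list"
  shows "esym xs 1 = psum xs 1
    \<and> 2 * esym xs 2 = psum xs 1 ^ 2 - psum xs 2
    \<and> 6 * esym xs 3 = psum xs 1 ^ 3 - 3 * psum xs 1 * psum xs 2 + 2 * psum xs 3
    \<and> 24 * esym xs 4 = psum xs 1 ^ 4 - 6 * psum xs 1 ^ 2 * psum xs 2 + 3 * psum xs 2 ^ 2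
                       + 8 * psum xs 1 * psum xs 3 - 6 * psum xs 4"
proof (induction xs)
  case Nil
  then show ?case by simp
next
  case (Cons x xs)
  have esym_Cons: "esym (x # xs) 1 = esym xs 1 + x" "esym (x # xs) 2 = esym xs 2 + x * esym xs 1"
    "esym (x # xs) 3 = esym xs 3 + x * esym xs 2" "esym (x # xs) 4 = esym xs 4 + x * esym xs 3"
    by (simp_all add: numeral_eq_Suc)
  have esym_xs: "esym xs 1 = psum xs 1" "esym xs 2 = (psum xs 1 ^ 2 - psum xs 2) / 2"
    "esym xs 3 = (psum xs 1 ^ 3 - 3 * psum xs 1 * psum xs 2 + 2 * psum xs 3) / 6"
    "esym xs 4 = (psum xs 1 ^ 4 - 6 * psum xs 1 ^ 2 * psum xs 2 + 3 * psum xs 2 ^ 2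
                  + 8 * psum xs 1 * psum xs 3 - 6 * psum xs 4) / 24"
    using Cons.IH by (simp_all add: field_simps)
  show ?case
    unfolding esym_Cons esym_xs psum_Cons
    by (simp add: field_simps power2_eq_square power3_eq_cube power4_eq_xxxx)
qed

lemma poly_prod_linear_factors:
  fixes xs :: "'a::comm_ring_1 list"
  shows "poly (\<Prod>x\<leftarrow>xs. [:-x, 1:]) t = (\<Prod>x\<leftarrow>xs. t - x)"
  by (induction xs) (auto simp: algebra_simps)

lemma poly_prod_linear_factors_eq_0_iff:
  fixes xs :: "'a::idom list"
  shows "poly (\<Prod>x\<leftarrow>xs. [:-x, 1:]) t = 0 \<longleftrightarrow> t \<in> set xs"
  unfolding poly_prod_linear_factors by (induction xs) auto

lemma coeff_prod_linear_factors:
  fixes xs :: "'a::comm_ring_1 list"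
  assumes "k \<le> length xs"
  shows "coeff (\<Prod>x\<leftarrow>xs. [:-x, 1:]) (length xs - k) = (-1) ^ k * esym xs k"
  using assms
proof (induction xs arbitrary: k)
  case Nil
  then show ?case by simp
next
  case (Cons y ys)
  define P where "P = (\<Prod>x\<leftarrow>ys. [:-x, 1:])"
  have "degree P \<le> length ys"
    unfolding P_def by (rule order.trans[OF degree_prod_list_le]) (induction ys, auto)
  then have coeff_P_high: "coeff P (Suc (length ys)) = 0"
    by (simp add: coeff_eq_0)
  have prod_Cons: "(\<Prod>x\<leftarrow>y # ys. [:-x, 1:]) = smult (-y) P + pCons 0 P"
    by (simp add: P_def)
  show ?case
  proof (cases k)
    case 0
    then show ?thesis
      using Cons.IH[of 0] coeff_P_high unfolding prod_Cons P_def[symmetric] by simp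
  next
    case (Suc j)
    show ?thesis
    proof (cases "j < length ys")
      case True
      then have "length (y # ys) - k = Suc (length ys - Suc j)" "length ys - j = Suc (length ys - Suc j)"
        using Suc by simp_all
      then show ?thesis
        using Cons.IH[of j] Cons.IH[of "Suc j"] True Suc
        unfolding prod_Cons P_def[symmetric] by (auto simp: algebra_simps)
    next
      case False
      then have "j = length ys"
        using Cons.prems Suc by simp
      then show ?thesis
        using Cons.IH[of j] Suc esym_eq_0_if_length_less[of ys "Suc j"]
        unfolding prod_Cons P_def[symmetric] by (simp add: algebra_simps)
    qed
  qed
qed

lemma depressed_prod_linear_factors_coeffs:
  fixes xs :: "'a::field_char_0 list"
  defines "P \<equiv> \<Prod>x\<leftarrow>xs. [:-x, 1:]"
  assumes "4 \<le> length xs" and "coeff P (length xs - 1) = 0"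
  shows "psum xs 1 = 0"
    and "(coeff P (length xs - 2))\<^sup>2 - 2 * coeff P (length xs - 4) = psum xs 4 / 2"
proof -
  have coeff_P: "coeff P (length xs - k) = (-1) ^ k * esym xs k" if "k \<le> 4" for k
    using coeff_prod_linear_factors[of k xs] that assms(2) unfolding P_def by simp
  show "psum xs 1 = 0"
    using coeff_P[of 1] assms(3) newton_identities_upto_4[of xs] by simp
  then have esym_2_4: "esym xs 2 = - psum xs 2 / 2"
    "esym xs 4 = (3 * psum xs 2 ^ 2 - 6 * psum xs 4) / 24"
    using newton_identities_upto_4[of xs] by (auto simp: field_simps)
  show "(coeff P (length xs - 2))\<^sup>2 - 2 * coeff P (length xs - 4) = psum xs 4 / 2"
    unfolding coeff_P[of 2, simplified] coeff_P[of 4, simplified] esym_2_4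
    by (simp add: field_simps power2_eq_square)
qed

lemma real_rooted_monic_poly_splits:
  fixes f :: "real poly"
  assumes "lead_coeff f = 1"
    and "\<forall>z. poly (map_poly complex_of_real f) z = 0 \<longrightarrow> z \<in> \<real>"
  obtains xs where "length xs = degree f" and "f = (\<Prod>x\<leftarrow>xs. [:-x, 1:])"
proof -
  define fc where "fc = map_poly complex_of_real f"
  define n where "n = degree f"
  have "degree fc = n" "lead_coeff fc = 1"
    using assms(1) by (simp_all add: fc_def n_def degree_map_poly coeff_map_poly)
  then obtain r where fc: "fc = (\<Prod>i<n. [:-r i, 1:])"
    using complex_poly_decompose'[of fc] by (metis smult_1_left)
  have r_real: "r i = of_real (Re (r i))" if "i < n" for i
  proof -
    have "poly fc (r i) = 0"
      unfolding fc poly_prod using that by (auto intro: prod_zero)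
    then show ?thesis
      using assms(2) by (simp add: fc_def complex_is_Real_iff)
  qed
  define xs where "xs = map (\<lambda>i. Re (r i)) [0..<n]"
  have "poly f t = poly (\<Prod>x\<leftarrow>xs. [:-x, 1:]) t" for t
  proof -
    have "complex_of_real (poly f t) = poly fc (of_real t)"
      unfolding fc_def by (induction f) (auto simp: map_poly_pCons)
    also have "\<dots> = (\<Prod>i<n. complex_of_real (t - Re (r i)))"
      unfolding fc poly_prod by (rule prod.cong) (use r_real in auto)
    also have "\<dots> = complex_of_real (poly (\<Prod>x\<leftarrow>xs. [:-x, 1:]) t)"
      by (simp add: xs_def o_def prod.list_conv_set_nth atLeast0LessThan poly_prod)
    finally show ?thesis
      by simp
  qed
  then have "f = (\<Prod>x\<leftarrow>xs. [:-x, 1:])"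
    using poly_eq_poly_eq_iff by blast
  moreover have "length xs = degree f"
    by (simp add: xs_def n_def)
  ultimately show ?thesis
    using that by blast
qed

lemma spn_prod_linear_factors:
  fixes xs :: "real list"
  assumes "xs \<noteq> []"
  shows "spn (\<Prod>x\<leftarrow>xs. [:-x, 1:]) = Max (set xs) - Min (set xs)"
proof -
  have "{\<bar>x - y\<bar> | x y. poly (\<Prod>x\<leftarrow>xs. [:-x, 1:]) x = 0 \<and> poly (\<Prod>x\<leftarrow>xs. [:-x, 1:]) y = 0}
      = (\<lambda>(x, y). \<bar>x - y\<bar>) ` (set xs \<times> set xs)"
    unfolding poly_prod_linear_factors_eq_0_iff by auto
  moreover have "Max ((\<lambda>(x, y). \<bar>x - y\<bar>) ` (set xs \<times> set xs)) = Max (set xs) - Min (set xs)"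
  proof (rule Max_eqI)
    fix z
    assume "z \<in> (\<lambda>(x, y). \<bar>x - y\<bar>) ` (set xs \<times> set xs)"
    then obtain x y where "x \<in> set xs" "y \<in> set xs" "z = \<bar>x - y\<bar>"
      by auto
    moreover from this have "x \<le> Max (set xs)" "y \<le> Max (set xs)" "Min (set xs) \<le> x" "Min (set xs) \<le> y"
      by simp_all
    ultimately show "z \<le> Max (set xs) - Min (set xs)"
      by linarith
  next
    have "Max (set xs) \<in> set xs" "Min (set xs) \<in> set xs" "Min (set xs) \<le> Max (set xs)"
      using assms Min_le[of "set xs" "Max (set xs)"] by simp_all
    then show "Max (set xs) - Min (set xs) \<in> (\<lambda>(x, y). \<bar>x - y\<bar>) ` (set xs \<times> set xs)"
      by (intro image_eqI[of _ _ "(Max (set xs), Min (set xs))"]) auto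
  qed simp
  ultimately show ?thesis
    unfolding spn_def by simp
qed

lemma sum_set_le_sum_list:
  fixes f :: "'a \<Rightarrow> 'b::ordered_comm_monoid_add"
  assumes "\<And>x. x \<in> set xs \<Longrightarrow> 0 \<le> f x"
  shows "sum f (set xs) \<le> (\<Sum>x\<leftarrow>xs. f x)"
  using assms
proof (induction xs)
  case Nil
  then show ?case by simp
next
  case (Cons x xs)
  have "sum f (set (x # xs)) \<le> f x + sum f (set xs)"
    using Cons.prems by (simp add: sum.insert_if add_increasing)
  also have "\<dots> \<le> f x + (\<Sum>x\<leftarrow>xs. f x)"
    using Cons by (simp add: add_left_mono)
  finally show ?case
    by simp
qed

lemma diff_power4_le:
  fixes m M :: "'a::linordered_idom"
  shows "(M - m) ^ 4 \<le> 8 * (M ^ 4 + m ^ 4)"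
proof -
  have "8 * (M ^ 4 + m ^ 4) - (M - m) ^ 4
      = 4 * (M\<^sup>2 - m\<^sup>2)\<^sup>2 + (M + m)\<^sup>2 * (2 * (M\<^sup>2 + m\<^sup>2) + (M - m)\<^sup>2)"
    by (simp add: algebra_simps power2_eq_square power4_eq_xxxx)
  also have "\<dots> \<ge> 0"
    by simp
  finally show ?thesis
    by simp
qed

lemma power4_le_chord:
  fixes m M x :: "'a::linordered_idom"
  assumes "m \<le> x" "x \<le> M"
  shows "(M - m) * x ^ 4 \<le> (M - x) * m ^ 4 + (x - m) * M ^ 4"
proof -
  have "4 * ((M - x) * m ^ 4 + (x - m) * M ^ 4 - (M - m) * x ^ 4)
      = (M - m) * (M - x) * (x - m) * ((2 * x + m + M)\<^sup>2 + (m + M)\<^sup>2 + 2 * m\<^sup>2 + 2 * M\<^sup>2)"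
    by (simp add: algebra_simps power2_eq_square power4_eq_xxxx)
  also have "\<dots> \<ge> 0"
    using assms by (intro mult_nonneg_nonneg) auto
  finally show ?thesis
    by simp
qed

lemma psum4_le_chord:
  fixes xs :: "'a::linordered_idom list"
  assumes "\<And>x. x \<in> set xs \<Longrightarrow> m \<le> x \<and> x \<le> M"
  shows "(M - m) * psum xs 4 \<le> of_nat (length xs) * (M * m ^ 4 - m * M ^ 4) + (M ^ 4 - m ^ 4) * psum xs 1"
  using assms
proof (induction xs)
  case Nil
  then show ?case by simp
next
  case (Cons x xs)
  have "(M - m) * x ^ 4 \<le> (M - x) * m ^ 4 + (x - m) * M ^ 4"
    using Cons.prems by (intro power4_le_chord) auto
  with Cons show ?case
    by (simp add: algebra_simps)
qed

lemma spread_power4_le_psum4: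
  fixes xs :: "real list"
  assumes "xs \<noteq> []"
  shows "(Max (set xs) - Min (set xs)) ^ 4 \<le> 8 * psum xs 4"
proof (cases "Max (set xs) = Min (set xs)")
  case True
  have "0 \<le> psum xs 4"
    unfolding psum_def by (rule sum_list_nonneg) auto
  with True show ?thesis
    by simp
next
  case False
  define M m where "M = Max (set xs)" and "m = Min (set xs)"
  have "M ^ 4 + m ^ 4 = sum (\<lambda>x. x ^ 4) {M, m}"
    using False by (simp add: M_def m_def)
  also have "\<dots> \<le> sum (\<lambda>x. x ^ 4) (set xs)"
    using assms by (intro sum_mono2) (auto simp: M_def m_def)
  also have "\<dots> \<le> psum xs 4"
    unfolding psum_def by (rule sum_set_le_sum_list) simp
  finally show ?thesis
    using diff_power4_le[of M m] by (simp add: M_def m_def)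
qed

lemma psum4_le_spread_power4:
  fixes xs :: "real list"
  assumes "xs \<noteq> []" and "psum xs 1 = 0"
  shows "12 * psum xs 4 \<le> length xs * (Max (set xs) - Min (set xs)) ^ 4"
proof -
  define M m where "M = Max (set xs)" and "m = Min (set xs)"
  have bounds: "m \<le> x \<and> x \<le> M" if "x \<in> set xs" for x
    using that by (simp add: M_def m_def)
  show ?thesis
  proof (cases "m = M")
    case True
    then have "xs = replicate (length xs) m"
      using bounds by (metis antisym replicate_length_same)
    then have psum_const: "psum xs k = length xs * m ^ k" for k
      by (metis psum_def map_replicate sum_list_replicate of_nat_id)
    then have "m = 0"
      using assms psum_const[of 1] by simp
    then show ?thesis
      using psum_const[of 4] by simp
  next
    case False
    then have "m < M"
      using bounds[of "hd xs"] assms(1) by fastforce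
    have "(M - m) * psum xs 4 \<le> length xs * (M * m ^ 4 - m * M ^ 4)"
      using psum4_le_chord[of xs m M] bounds assms(2) by simp
    then have "(M - m) * (12 * psum xs 4) \<le> length xs * (12 * (M * m ^ 4 - m * M ^ 4))"
      using mult_left_mono[of _ _ 12] by (simp add: algebra_simps)
    also have "12 * (M * m ^ 4 - m * M ^ 4) = (M - m) * ((M - m) ^ 4 - (M\<^sup>2 + 4 * M * m + m\<^sup>2)\<^sup>2)"
      by (simp add: algebra_simps power2_eq_square power4_eq_xxxx)
    also have "length xs * \<dots> \<le> (M - m) * (length xs * (M - m) ^ 4)"
    proof -
      have "0 \<le> length xs * (M - m) * (M\<^sup>2 + 4 * M * m + m\<^sup>2)\<^sup>2"
        using \<open>m < M\<close> by simp
      then show ?thesis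
        by (simp add: algebra_simps)
    qed
    finally show ?thesis
      using \<open>m < M\<close> by (simp add: M_def m_def)
  qed
qed

lemma real_root_le_if_le_power:
  assumes "0 < k" "0 \<le> d" "a \<le> d ^ k"
  shows "root k a \<le> d"
  using real_root_le_mono[OF assms(1,3)] real_root_power_cancel[OF assms(1,2)] by simp

lemma le_real_root_if_power_le:
  assumes "0 < k" "0 \<le> d" "d ^ k \<le> a"
  shows "d \<le> root k a"
  using real_root_le_mono[OF assms(1,3)] real_root_power_cancel[OF assms(1,2)] by simp

theorem theorem4p1:
  fixes f :: "real poly" and n :: nat
  assumes "n \<ge> 5"
    and "degree f = n" and "lead_coeff f = 1"
    and "coeff f (n - 1) = 0"
    and "\<forall>z. poly (map_poly complex_of_real f) z = 0 \<longrightarrow> z \<in> \<real>"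
  shows "root 4 ((24 / real n) * ((coeff f (n - 2))\<^sup>2 - 2 * coeff f (n - 4))) \<le> spn f
       \<and> spn f \<le> 2 * root 4 ((coeff f (n - 2))\<^sup>2 - 2 * coeff f (n - 4))"
proof -
  obtain xs where len: "length xs = n" and f: "f = (\<Prod>x\<leftarrow>xs. [:-x, 1:])"
    using real_rooted_monic_poly_splits[OF assms(3,5)] assms(2) by metis
  have "xs \<noteq> []"
    using len assms(1) by auto
  have "psum xs 1 = 0" and A: "(coeff f (n - 2))\<^sup>2 - 2 * coeff f (n - 4) = psum xs 4 / 2"
    using depressed_prod_linear_factors_coeffs[of xs] assms(1,4) unfolding f len by simp_all
  have d: "spn f = Max (set xs) - Min (set xs)"
    using spn_prod_linear_factors[OF \<open>xs \<noteq> []\<close>] f by simp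
  then have "0 \<le> spn f"
    using \<open>xs \<noteq> []\<close> Min_le[of "set xs" "Max (set xs)"] by simp
  have "12 * psum xs 4 \<le> n * spn f ^ 4"
    using psum4_le_spread_power4[OF \<open>xs \<noteq> []\<close> \<open>psum xs 1 = 0\<close>] unfolding d len .
  then have lower: "root 4 (24 / real n * (psum xs 4 / 2)) \<le> spn f"
    using assms(1) \<open>0 \<le> spn f\<close> by (intro real_root_le_if_le_power) (simp_all add: field_simps)
  have "spn f \<le> root 4 (2 ^ 4 * (psum xs 4 / 2))"
    using spread_power4_le_psum4[OF \<open>xs \<noteq> []\<close>] \<open>0 \<le> spn f\<close> unfolding d
    by (intro le_real_root_if_power_le) simp_all
  then have upper: "spn f \<le> 2 * root 4 (psum xs 4 / 2)"
    by (simp only: real_root_mult real_root_power_cancel)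
  show ?thesis
    unfolding A using lower upper by simp
qed

end
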